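(* Let $T>0$, $x_0\in\mathbb{R}$, and let $(W,a)\in\mathcal{C}$. For $\gamma_P\in(0,1)$ let $\tilde U_P(x):=-\frac{\exp(-\gamma_P x)-1}{\gamma_P}$. Then the family of random variables $\left(\tilde U_P(X_T^a-W)\right)_{0<\gamma_P<1}$ is uniformly integrable, and consequently $$\mathbb{E}\left[X_T^a-W\right]=\mathbb{E}\left[\lim_{\gamma_P\to0}\tilde U_P(X_T^a-W)\right]=\lim_{\gamma_P\to0}\mathbb{E}\left[\tilde U_P(X_T^a-W)\right].$$
   Context: Fix $T>0$. Let $(\Omega,\mathcal{F},\mathbb{P})$ be a probability space carrying a standard one-dimensional Brownian motion $B=(B_t)_{t\in[0,T]}$, and let $\mathbb{F}=(\mathcal{F}_t)_{t\in[0,T]}$ be its natural completed filtration. Let $\mathbb{H}_2$ be the set of $\mathbb{F}$-predictable processes $a=(a_t)_{t\in[0,T]}$ with values in $[0,\infty)$ such that $\mathbb{E}[\exp(q\int_0^T|a_t|^2dt)]<\infty$ for all $q>0$. For $a\in\mathbb{H}_2$ and a fixed $x_0\in\mathbb{R}$, set $X_t^a=x_0+\int_0^t a_s\,ds+B_t$. Let $\mathcal{W}$ be the set of $\mathcal{F}_T$-measurable random variables $W$ with $\mathbb{E}[\exp(qW)]<\infty$ for all $q\in\mathbb{R}\setminus\{0\}$, and $\mathcal{C}=\{(W,a):W\in\mathcal{W},a\in\mathbb{H}_2\}$. *)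

theory Defs
  imports "HOL-Probability.Probability"
begin

definition std_brownian_motion :: "'a measure \<Rightarrow> real \<Rightarrow> (real \<Rightarrow> 'a \<Rightarrow> real) \<Rightarrow> bool" where
  "std_brownian_motion M T B \<longleftrightarrow>
     prob_space M \<and>
     (\<forall>t\<in>{0..T}. B t \<in> borel_measurable M) \<and>
     (AE \<omega> in M. B 0 \<omega> = 0) \<and>
     (AE \<omega> in M. continuous_on {0..T} (\<lambda>t. B t \<omega>)) \<and>
     (\<forall>s t. 0 \<le> s \<and> s < t \<and> t \<le> T \<longrightarrow>
        distributed M lborel (\<lambda>\<omega>. B t \<omega> - B s \<omega>) (normal_density 0 (sqrt (t - s)))) \<and>
     (\<forall>(n::nat) (u::nat \<Rightarrow> real). 0 \<le> u 0 \<and> u n \<le> T \<and> (\<forall>i<n. u i < u (Suc i)) \<longrightarrow>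
        prob_space.indep_vars M (\<lambda>_. borel) (\<lambda>i \<omega>. B (u (Suc i)) \<omega> - B (u i) \<omega>) {..<n})"

definition nat_filtration :: "'a measure \<Rightarrow> (real \<Rightarrow> 'a \<Rightarrow> real) \<Rightarrow> real \<Rightarrow> 'a measure" where
  "nat_filtration M B t = sigma (space M)
     ((\<Union>s\<in>{0..t}. {B s -` A \<inter> space M | A. A \<in> sets borel}) \<union> null_sets M)"

definition predictable_sigma :: "'a measure \<Rightarrow> real \<Rightarrow> (real \<Rightarrow> 'a measure) \<Rightarrow> (real \<times> 'a) measure" where
  "predictable_sigma M T F = sigma ({0..T} \<times> space M)
     ({{0} \<times> A | A. A \<in> sets (F 0)} \<union>
      {{s<..t} \<times> A | s t A. 0 \<le> s \<and> s < t \<and> t \<le> T \<and> A \<in> sets (F s)})"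

definition exp_moment_enn :: "'a measure \<Rightarrow> real \<Rightarrow> ('a \<Rightarrow> ennreal) \<Rightarrow> ennreal" where
  "exp_moment_enn M q Y = (\<integral>\<^sup>+\<omega>. (if Y \<omega> = \<infinity> then \<infinity> else ennreal (exp (q * enn2real (Y \<omega>)))) \<partial>M)"

definition H2 :: "'a measure \<Rightarrow> real \<Rightarrow> (real \<Rightarrow> 'a \<Rightarrow> real) \<Rightarrow> (real \<Rightarrow> 'a \<Rightarrow> real) set" where
  "H2 M T B = {a. (\<lambda>(t, \<omega>). a t \<omega>) \<in> measurable (predictable_sigma M T (nat_filtration M B)) borel \<and>
                 (\<forall>t\<in>{0..T}. \<forall>\<omega>\<in>space M. a t \<omega> \<ge> 0) \<and>
                 (\<forall>q>0. exp_moment_enn M q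
                    (\<lambda>\<omega>. \<integral>\<^sup>+ s. ennreal ((a s \<omega>)\<^sup>2) * indicator {0..T} s \<partial>lborel) < \<infinity>)}"

definition Wset :: "'a measure \<Rightarrow> real \<Rightarrow> (real \<Rightarrow> 'a \<Rightarrow> real) \<Rightarrow> ('a \<Rightarrow> real) set" where
  "Wset M T B = {W. W \<in> borel_measurable (nat_filtration M B T) \<and>
                   (\<forall>q. q \<noteq> 0 \<longrightarrow> integrable M (\<lambda>\<omega>. exp (q * W \<omega>)))}"

definition state_proc :: "real \<Rightarrow> (real \<Rightarrow> 'a \<Rightarrow> real) \<Rightarrow> (real \<Rightarrow> 'a \<Rightarrow> real) \<Rightarrow> real \<Rightarrow> 'a \<Rightarrow> real" where
  "state_proc x0 B a t \<omega> = x0 + (LINT s:{0..t}|lborel. a s \<omega>) + B t \<omega>"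

definition U_tilde :: "real \<Rightarrow> real \<Rightarrow> real" where
  "U_tilde \<gamma> x = - (exp (- \<gamma> * x) - 1) / \<gamma>"

definition unif_integrable :: "'a measure \<Rightarrow> 'i set \<Rightarrow> ('i \<Rightarrow> 'a \<Rightarrow> real) \<Rightarrow> bool" where
  "unif_integrable M I Y \<longleftrightarrow>
     (\<forall>i\<in>I. Y i \<in> borel_measurable M) \<and>
     ((\<lambda>K::real. SUP i\<in>I. \<integral>\<^sup>+\<omega>. ennreal \<bar>Y i \<omega>\<bar> * indicator {\<omega>\<in>space M. \<bar>Y i \<omega>\<bar> > K} \<omega> \<partial>M)
        \<longlongrightarrow> 0) at_top"

end

theory Submission
  imports Defs
begin

(* Y = X_T^a - W has finite exponential moments exp(c |Y|) of every order c > 0: W by assumption,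
   B_T because it is Gaussian, and the drift integral because |int_0^T a| <= T + int_0^T a^2,
   whose exponential moments are part of the definition of H_2; the class of such variables is
   closed under sums. For 0 < gamma < 1 the variables U_gamma(Y) are dominated by the integrable
   exp(2 |Y|), hence uniformly integrable, and U_gamma(y) -> y as gamma -> 0, so dominated
   convergence gives the limit of the expectations. *)

lemma abs_one_minus_exp_le:
  fixes t :: real
  shows "\<bar>1 - exp (- t)\<bar> \<le> \<bar>t\<bar> * exp \<bar>t\<bar>"
proof (cases "t \<ge> 0")
  case True
  have "1 - t \<le> exp (- t)" using exp_ge_add_one_self[of "- t"] by simp
  moreover have "exp (- t) \<le> 1" using True by simp
  moreover have "t * 1 \<le> t * exp t" using True by (intro mult_left_mono) auto
  ultimately show ?thesis using True by simp
next
  case False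
  have "exp (- t) * (1 + t) \<le> exp (- t) * exp t"
    using exp_ge_add_one_self[of t] by (intro mult_left_mono) auto
  then have "exp (- t) - 1 \<le> - t * exp (- t)" by (simp add: algebra_simps exp_minus_inverse)
  moreover have "1 \<le> exp (- t)" using False by simp
  ultimately show ?thesis using False by simp
qed

lemma abs_U_tilde_le:
  assumes "0 < \<gamma>" "\<gamma> < 1"
  shows "\<bar>U_tilde \<gamma> y\<bar> \<le> exp (2 * \<bar>y\<bar>)"
proof -
  have "\<bar>U_tilde \<gamma> y\<bar> = \<bar>1 - exp (- (\<gamma> * y))\<bar> / \<gamma>"
    using assms by (simp add: U_tilde_def abs_minus_commute)
  also have "\<dots> \<le> \<gamma> * \<bar>y\<bar> * exp (\<gamma> * \<bar>y\<bar>) / \<gamma>"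
    using abs_one_minus_exp_le[of "\<gamma> * y"] assms by (intro divide_right_mono) (auto simp: abs_mult)
  also have "\<dots> = \<bar>y\<bar> * exp (\<gamma> * \<bar>y\<bar>)" using assms by simp
  also have "\<dots> \<le> exp \<bar>y\<bar> * exp \<bar>y\<bar>"
  proof (intro mult_mono)
    show "\<bar>y\<bar> \<le> exp \<bar>y\<bar>" using exp_ge_add_one_self[of "\<bar>y\<bar>"] by linarith
  qed (use assms in \<open>auto simp: mult_left_le_one_le\<close>)
  also have "\<dots> = exp (2 * \<bar>y\<bar>)" by (simp flip: exp_add)
  finally show ?thesis .
qed

lemma U_tilde_tendsto: "((\<lambda>\<gamma>. U_tilde \<gamma> y) \<longlongrightarrow> y) (at_right 0)"
proof -
  \<comment> \<open>U_tilde \<gamma> y is minus the difference quotient of \<gamma> \<mapsto> exp (- \<gamma> * y) at 0.\<close>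
  have "((\<lambda>\<gamma>. exp (- \<gamma> * y)) has_real_derivative - y) (at 0)"
    by (auto intro!: derivative_eq_intros)
  then have "((\<lambda>\<gamma>. (exp (- \<gamma> * y) - 1) / \<gamma>) \<longlongrightarrow> - y) (at 0)"
    by (simp add: DERIV_def)
  from tendsto_minus[OF this] have "((\<lambda>\<gamma>. U_tilde \<gamma> y) \<longlongrightarrow> y) (at 0)"
    by (simp add: U_tilde_def minus_divide_left)
  then show ?thesis by (rule tendsto_mono[OF at_le, rotated]) simp
qed

lemma tendsto_integral_upper_tail:
  fixes G :: "'a \<Rightarrow> real"
  assumes G: "integrable M G"
  shows "((\<lambda>K. \<integral>\<omega>. G \<omega> * indicator {\<omega>\<in>space M. K < G \<omega>} \<omega> \<partial>M) \<longlongrightarrow> 0) at_top"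
proof -
  have "((\<lambda>K. \<integral>\<omega>. G \<omega> * indicator {\<omega>\<in>space M. K < G \<omega>} \<omega> \<partial>M) \<longlongrightarrow> \<integral>\<omega>. 0 \<partial>M) at_top"
  proof (rule integral_dominated_convergence_at_top[where w="\<lambda>\<omega>. \<bar>G \<omega>\<bar>"])
    show "AE \<omega> in M. ((\<lambda>K. G \<omega> * indicator {\<omega>\<in>space M. K < G \<omega>} \<omega>) \<longlongrightarrow> 0) at_top"
    proof (intro AE_I2 tendsto_eventually)
      fix \<omega> show "\<forall>\<^sub>F K in at_top. G \<omega> * indicator {\<omega>\<in>space M. K < G \<omega>} \<omega> = 0"
        using eventually_ge_at_top[of "G \<omega>"] by eventually_elim (simp add: indicator_def)
    qed
    show "\<forall>\<^sub>F K in at_top. AE \<omega> in M. norm (G \<omega> * indicator {\<omega>\<in>space M. K < G \<omega>} \<omega>) \<le> \<bar>G \<omega>\<bar>"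
      by (simp add: indicator_def)
  qed (use G in \<open>auto simp: borel_measurable_integrable\<close>)
  then show ?thesis by simp
qed

lemma unif_integrable_dominated:
  fixes Y :: "'i \<Rightarrow> 'a \<Rightarrow> real"
  assumes Y: "\<And>i. i \<in> I \<Longrightarrow> Y i \<in> borel_measurable M"
    and G: "integrable M G"
    and dominated: "\<And>i \<omega>. i \<in> I \<Longrightarrow> \<omega> \<in> space M \<Longrightarrow> \<bar>Y i \<omega>\<bar> \<le> G \<omega>"
  shows "unif_integrable M I Y"
  unfolding unif_integrable_def
proof (intro conjI ballI Y)
  define tail where "tail K = (\<integral>\<omega>. G \<omega> * indicator {\<omega>\<in>space M. K < G \<omega>} \<omega> \<partial>M)" for K
  have bound: "(SUP i\<in>I. \<integral>\<^sup>+\<omega>. ennreal \<bar>Y i \<omega>\<bar> * indicator {\<omega>\<in>space M. \<bar>Y i \<omega>\<bar> > K} \<omega> \<partial>M)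
      \<le> ennreal (tail K)" if "0 \<le> K" for K
  proof (rule SUP_least)
    fix i assume "i \<in> I"
    have "(\<integral>\<^sup>+\<omega>. ennreal \<bar>Y i \<omega>\<bar> * indicator {\<omega>\<in>space M. \<bar>Y i \<omega>\<bar> > K} \<omega> \<partial>M)
        \<le> (\<integral>\<^sup>+\<omega>. ennreal (G \<omega> * indicator {\<omega>\<in>space M. K < G \<omega>} \<omega>) \<partial>M)"
    proof (intro nn_integral_mono)
      fix \<omega> assume "\<omega> \<in> space M"
      with dominated[OF \<open>i \<in> I\<close> this] show "ennreal \<bar>Y i \<omega>\<bar> * indicator {\<omega>\<in>space M. \<bar>Y i \<omega>\<bar> > K} \<omega>
          \<le> ennreal (G \<omega> * indicator {\<omega>\<in>space M. K < G \<omega>} \<omega>)"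
        by (cases "K < \<bar>Y i \<omega>\<bar>") (auto simp: indicator_def ennreal_leI)
    qed
    also have "\<dots> = ennreal (tail K)"
    proof (unfold tail_def, intro nn_integral_eq_integral integrable_real_mult_indicator G)
      show "{\<omega>\<in>space M. K < G \<omega>} \<in> sets M"
        using borel_measurable_integrable[OF G] by measurable
    qed (use \<open>0 \<le> K\<close> in \<open>auto simp: indicator_def\<close>)
    finally show "(\<integral>\<^sup>+\<omega>. ennreal \<bar>Y i \<omega>\<bar> * indicator {\<omega>\<in>space M. \<bar>Y i \<omega>\<bar> > K} \<omega> \<partial>M)
        \<le> ennreal (tail K)" .
  qed
  have lim: "((\<lambda>K. ennreal (tail K)) \<longlongrightarrow> 0) at_top"
    unfolding tail_def using tendsto_ennrealI[OF tendsto_integral_upper_tail[OF G]] by simp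
  show "((\<lambda>K. SUP i\<in>I. \<integral>\<^sup>+\<omega>. ennreal \<bar>Y i \<omega>\<bar> * indicator {\<omega>\<in>space M. \<bar>Y i \<omega>\<bar> > K} \<omega> \<partial>M)
      \<longlongrightarrow> 0) at_top"
  proof (rule tendsto_sandwich[OF _ _ tendsto_const lim])
    show "\<forall>\<^sub>F K in at_top. (SUP i\<in>I. \<integral>\<^sup>+\<omega>. ennreal \<bar>Y i \<omega>\<bar> * indicator {\<omega>\<in>space M. \<bar>Y i \<omega>\<bar> > K} \<omega> \<partial>M)
        \<le> ennreal (tail K)"
      using eventually_ge_at_top[of 0] by eventually_elim (rule bound)
  qed simp_all
qed

lemma unif_integrable_U_tilde:
  assumes "Y \<in> borel_measurable M" "integrable M (\<lambda>\<omega>. exp (2 * \<bar>Y \<omega>\<bar>))"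
  shows "unif_integrable M {0<..<1} (\<lambda>\<gamma> \<omega>. U_tilde \<gamma> (Y \<omega>))"
proof (rule unif_integrable_dominated)
  show "(\<lambda>\<omega>. U_tilde \<gamma> (Y \<omega>)) \<in> borel_measurable M" for \<gamma>
    using assms(1) by (simp add: U_tilde_def)
  show "\<bar>U_tilde \<gamma> (Y \<omega>)\<bar> \<le> exp (2 * \<bar>Y \<omega>\<bar>)" if "\<gamma> \<in> {0<..<1}" for \<gamma> \<omega>
    using that by (intro abs_U_tilde_le) auto
qed (fact assms(2))

lemma tendsto_integral_U_tilde:
  assumes Y: "Y \<in> borel_measurable M" and exp_Y: "integrable M (\<lambda>\<omega>. exp (2 * \<bar>Y \<omega>\<bar>))"
  shows "((\<lambda>\<gamma>. \<integral>\<omega>. U_tilde \<gamma> (Y \<omega>) \<partial>M) \<longlongrightarrow> (\<integral>\<omega>. Y \<omega> \<partial>M)) (at_right 0)"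
  unfolding filterlim_at_right_to_top
proof (rule integral_dominated_convergence_at_top[OF Y _ exp_Y])
  show "(\<lambda>\<omega>. U_tilde (inverse t) (Y \<omega>)) \<in> borel_measurable M" for t
    using Y by (simp add: U_tilde_def)
  show "AE \<omega> in M. ((\<lambda>t. U_tilde (inverse t) (Y \<omega>)) \<longlongrightarrow> Y \<omega>) at_top"
    by (intro AE_I2 filterlim_compose[OF U_tilde_tendsto filterlim_inverse_at_right_top])
  show "\<forall>\<^sub>F t in at_top. AE \<omega> in M. norm (U_tilde (inverse t) (Y \<omega>)) \<le> exp (2 * \<bar>Y \<omega>\<bar>)"
    using eventually_gt_at_top[of "1::real"]
    by eventually_elim (auto intro!: abs_U_tilde_le simp: inverse_less_1_iff)
qed

definition has_exp_moments :: "'a measure \<Rightarrow> ('a \<Rightarrow> real) \<Rightarrow> bool" where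
  "has_exp_moments M X \<longleftrightarrow> X \<in> borel_measurable M \<and> (\<forall>c>0. integrable M (\<lambda>\<omega>. exp (c * \<bar>X \<omega>\<bar>)))"

lemma has_exp_moments_integrable:
  assumes "has_exp_moments M X"
  shows "integrable M X"
proof (rule Bochner_Integration.integrable_bound)
  show "integrable M (\<lambda>\<omega>. exp (1 * \<bar>X \<omega>\<bar>))"
    using assms unfolding has_exp_moments_def by (metis zero_less_one)
  have "\<bar>x\<bar> \<le> exp \<bar>x\<bar>" for x :: real
    using exp_ge_add_one_self[of "\<bar>x\<bar>"] by linarith
  then show "AE \<omega> in M. norm (X \<omega>) \<le> norm (exp (1 * \<bar>X \<omega>\<bar>))"
    by (intro AE_I2) simp
qed (use assms in \<open>simp add: has_exp_moments_def\<close>)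

lemma has_exp_moments_const:
  assumes "finite_measure M"
  shows "has_exp_moments M (\<lambda>_. x)"
  using assms by (simp add: has_exp_moments_def finite_measure.integrable_const)

lemma has_exp_moments_of_exp_integrable:
  assumes exp_X: "\<And>q. q \<noteq> 0 \<Longrightarrow> integrable M (\<lambda>\<omega>. exp (q * X \<omega>))"
  shows "has_exp_moments M X"
  unfolding has_exp_moments_def
proof (intro conjI allI impI)
  have "(\<lambda>\<omega>. ln (exp (1 * X \<omega>))) \<in> borel_measurable M"
    using borel_measurable_integrable[OF exp_X[of 1]] by measurable
  then show X: "X \<in> borel_measurable M" by simp
  fix c :: real assume "c > 0"
  show "integrable M (\<lambda>\<omega>. exp (c * \<bar>X \<omega>\<bar>))"
  proof (rule Bochner_Integration.integrable_bound)
    show "integrable M (\<lambda>\<omega>. exp (c * X \<omega>) + exp (- c * X \<omega>))"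
      using \<open>c > 0\<close> by (intro Bochner_Integration.integrable_add exp_X) auto
    have "exp (c * \<bar>x\<bar>) \<le> exp (c * x) + exp (- c * x)" for x
      by (cases "x \<ge> 0") (auto simp: add_increasing add_increasing2)
    then show "AE \<omega> in M. norm (exp (c * \<bar>X \<omega>\<bar>)) \<le> norm (exp (c * X \<omega>) + exp (- c * X \<omega>))"
      by (intro AE_I2) (simp add: add_pos_pos)
  qed (use X in measurable)
qed

lemma has_exp_moments_dominated:
  assumes X: "has_exp_moments M X" and Y: "has_exp_moments M Y"
    and Z: "Z \<in> borel_measurable M" and le: "\<And>\<omega>. \<bar>Z \<omega>\<bar> \<le> \<bar>X \<omega>\<bar> + \<bar>Y \<omega>\<bar>"
  shows "has_exp_moments M Z"
  unfolding has_exp_moments_def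
proof (intro conjI allI impI Z)
  fix c :: real assume "c > 0"
  show "integrable M (\<lambda>\<omega>. exp (c * \<bar>Z \<omega>\<bar>))"
  proof (rule Bochner_Integration.integrable_bound)
    show "integrable M (\<lambda>\<omega>. exp (2 * c * \<bar>X \<omega>\<bar>) + exp (2 * c * \<bar>Y \<omega>\<bar>))"
      using X Y \<open>c > 0\<close> by (intro Bochner_Integration.integrable_add) (auto simp: has_exp_moments_def)
    have "exp (c * \<bar>Z \<omega>\<bar>) \<le> exp (2 * c * \<bar>X \<omega>\<bar>) + exp (2 * c * \<bar>Y \<omega>\<bar>)" for \<omega>
    proof -
      have "c * \<bar>Z \<omega>\<bar> \<le> 2 * c * max \<bar>X \<omega>\<bar> \<bar>Y \<omega>\<bar>"
        using le[of \<omega>] \<open>c > 0\<close> by (simp add: max_def mult_left_mono)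
      then have "exp (c * \<bar>Z \<omega>\<bar>) \<le> exp (2 * c * max \<bar>X \<omega>\<bar> \<bar>Y \<omega>\<bar>)" by simp
      also have "\<dots> \<le> exp (2 * c * \<bar>X \<omega>\<bar>) + exp (2 * c * \<bar>Y \<omega>\<bar>)"
        by (cases "\<bar>X \<omega>\<bar> \<le> \<bar>Y \<omega>\<bar>") (simp_all add: max_def add_increasing add_increasing2)
      finally show ?thesis .
    qed
    then show "AE \<omega> in M. norm (exp (c * \<bar>Z \<omega>\<bar>)) \<le> norm (exp (2 * c * \<bar>X \<omega>\<bar>) + exp (2 * c * \<bar>Y \<omega>\<bar>))"
      by (intro AE_I2) simp
  qed (use Z in measurable)
qed

lemma has_exp_moments_add:
  "has_exp_moments M X \<Longrightarrow> has_exp_moments M Y \<Longrightarrow> has_exp_moments M (\<lambda>\<omega>. X \<omega> + Y \<omega>)"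
  by (rule has_exp_moments_dominated[of M X Y]) (auto simp: has_exp_moments_def abs_triangle_ineq)

lemma has_exp_moments_diff:
  "has_exp_moments M X \<Longrightarrow> has_exp_moments M Y \<Longrightarrow> has_exp_moments M (\<lambda>\<omega>. X \<omega> - Y \<omega>)"
  by (rule has_exp_moments_dominated[of M X Y]) (auto simp: has_exp_moments_def abs_triangle_ineq4)

lemma normal_density_mult_exp_le:
  fixes \<sigma> k x :: real
  assumes "\<sigma> > 0"
  shows "normal_density 0 \<sigma> x * exp (k * x) \<le> exp (k\<^sup>2 * \<sigma>\<^sup>2) * sqrt 2 * normal_density 0 (sqrt 2 * \<sigma>) x"
proof -
  \<comment> \<open>Completing the square: the factor exp (k * x) costs doubling the variance.\<close>
  have "k * x \<le> k\<^sup>2 * \<sigma>\<^sup>2 + x\<^sup>2 / (4 * \<sigma>\<^sup>2)"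
  proof -
    have "k\<^sup>2 * \<sigma>\<^sup>2 + x\<^sup>2 / (4 * \<sigma>\<^sup>2) - k * x = (2 * k * \<sigma>\<^sup>2 - x)\<^sup>2 / (4 * \<sigma>\<^sup>2)"
      using assms by (simp add: field_simps power2_eq_square)
    moreover have "0 \<le> (2 * k * \<sigma>\<^sup>2 - x)\<^sup>2 / (4 * \<sigma>\<^sup>2)" by simp
    ultimately show ?thesis by linarith
  qed
  moreover have "(sqrt 2 * \<sigma>)\<^sup>2 = 2 * \<sigma>\<^sup>2" by (simp add: power_mult_distrib)
  moreover have "x\<^sup>2 / (2 * \<sigma>\<^sup>2) = x\<^sup>2 / (4 * \<sigma>\<^sup>2) + x\<^sup>2 / (4 * \<sigma>\<^sup>2)"
    using assms by (simp add: field_simps)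
  ultimately have "- x\<^sup>2 / (2 * \<sigma>\<^sup>2) + k * x \<le> k\<^sup>2 * \<sigma>\<^sup>2 + - x\<^sup>2 / (2 * (sqrt 2 * \<sigma>)\<^sup>2)"
    by (simp add: mult.assoc)
  then have "normal_density 0 \<sigma> x * exp (k * x)
      \<le> 1 / sqrt (2 * pi * \<sigma>\<^sup>2) * exp (k\<^sup>2 * \<sigma>\<^sup>2 + - x\<^sup>2 / (2 * (sqrt 2 * \<sigma>)\<^sup>2))"
    by (auto simp: normal_density_def exp_add[symmetric] intro!: divide_right_mono)
  also have "\<dots> = exp (k\<^sup>2 * \<sigma>\<^sup>2) * sqrt 2 * normal_density 0 (sqrt 2 * \<sigma>) x"
  proof -
    have "sqrt (2 * pi * (sqrt 2 * \<sigma>)\<^sup>2) = sqrt 2 * sqrt (2 * pi * \<sigma>\<^sup>2)"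
      by (simp add: power_mult_distrib real_sqrt_mult)
    then show ?thesis unfolding normal_density_def exp_add by simp
  qed
  finally show ?thesis .
qed

lemma has_exp_moments_normal:
  fixes X :: "'a \<Rightarrow> real"
  assumes X: "distributed M lborel X (normal_density 0 \<sigma>)" and "\<sigma> > 0"
  shows "has_exp_moments M X"
proof (rule has_exp_moments_of_exp_integrable)
  fix k :: real
  have "integrable lborel (\<lambda>x. normal_density 0 \<sigma> x * exp (k * x))"
  proof (rule Bochner_Integration.integrable_bound)
    show "integrable lborel (\<lambda>x. exp (k\<^sup>2 * \<sigma>\<^sup>2) * sqrt 2 * normal_density 0 (sqrt 2 * \<sigma>) x)"
      using \<open>\<sigma> > 0\<close> by (intro integrable_mult_right integrable_normal_density) simp
    show "AE x in lborel. norm (normal_density 0 \<sigma> x * exp (k * x))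
        \<le> norm (exp (k\<^sup>2 * \<sigma>\<^sup>2) * sqrt 2 * normal_density 0 (sqrt 2 * \<sigma>) x)"
      using normal_density_mult_exp_le[OF \<open>\<sigma> > 0\<close>] by (simp add: abs_mult)
  qed simp
  then show "integrable M (\<lambda>\<omega>. exp (k * X \<omega>))"
    using distributed_integrable[OF X, of "\<lambda>x. exp (k * x)"] by simp
qed

lemma has_exp_moments_brownian:
  assumes B: "std_brownian_motion M T B" and "0 < T"
  shows "has_exp_moments M (B T)"
proof -
  have "distributed M lborel (\<lambda>\<omega>. B T \<omega> - B 0 \<omega>) (normal_density 0 (sqrt T))"
    using B \<open>0 < T\<close> unfolding std_brownian_motion_def by fastforce
  then have increment: "has_exp_moments M (\<lambda>\<omega>. B T \<omega> - B 0 \<omega>)"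
    using \<open>0 < T\<close> by (intro has_exp_moments_normal[where \<sigma>="sqrt T"]) auto
  have B_T: "B T \<in> borel_measurable M"
    using B \<open>0 < T\<close> unfolding std_brownian_motion_def by auto
  have B_0: "AE \<omega> in M. B 0 \<omega> = 0"
    using B unfolding std_brownian_motion_def by auto
  show ?thesis
    unfolding has_exp_moments_def
  proof (intro conjI allI impI B_T)
    fix c :: real assume "c > 0"
    with increment have "integrable M (\<lambda>\<omega>. exp (c * \<bar>B T \<omega> - B 0 \<omega>\<bar>))"
      by (simp add: has_exp_moments_def)
    moreover have "(\<lambda>\<omega>. exp (c * \<bar>B T \<omega>\<bar>)) \<in> borel_measurable M"
      using B_T by measurable
    moreover have "AE \<omega> in M. exp (c * \<bar>B T \<omega> - B 0 \<omega>\<bar>) = exp (c * \<bar>B T \<omega>\<bar>)"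
      using B_0 by eventually_elim simp
    ultimately show "integrable M (\<lambda>\<omega>. exp (c * \<bar>B T \<omega>\<bar>))"
      by (rule integrable_cong_AE_imp)
  qed
qed

lemma sets_nat_filtration_subset:
  assumes "std_brownian_motion M T B" "0 \<le> s" "s \<le> T"
  shows "sets (nat_filtration M B s) \<subseteq> sets M"
proof -
  let ?G = "(\<Union>r\<in>{0..s}. {B r -` A \<inter> space M | A. A \<in> sets borel}) \<union> null_sets M"
  have "B r \<in> borel_measurable M" if "r \<in> {0..s}" for r
    using assms that unfolding std_brownian_motion_def by auto
  then have "?G \<subseteq> sets M" using measurable_sets by blast
  moreover have G_space: "?G \<subseteq> Pow (space M)" using sets.sets_into_space by auto
  ultimately show ?thesis unfolding nat_filtration_def using sigma_le_sets[OF G_space] by auto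
qed

lemma space_predictable_sigma: "space (predictable_sigma M T F) = {0..T} \<times> space M"
  unfolding predictable_sigma_def by (rule space_measure_of_conv)

lemma sets_predictable_sigma_subset:
  assumes "std_brownian_motion M T B" "0 \<le> T"
  shows "sets (predictable_sigma M T (nat_filtration M B))
    \<subseteq> sets (restrict_space (lborel \<Otimes>\<^sub>M M) ({0..T} \<times> space M))"
proof -
  let ?O = "{0..T} \<times> space M"
  let ?G = "{{0} \<times> A | A. A \<in> sets (nat_filtration M B 0)} \<union>
      {{s<..t} \<times> A | s t A. 0 \<le> s \<and> s < t \<and> t \<le> T \<and> A \<in> sets (nat_filtration M B s)}"
  have O: "?O \<in> sets (lborel \<Otimes>\<^sub>M M)" by (intro pair_measureI) auto
  have F: "A \<in> sets M" if "A \<in> sets (nat_filtration M B s)" "0 \<le> s" "s \<le> T" for A s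
    using sets_nat_filtration_subset[OF assms(1) that(2,3)] that(1) by auto
  have G_space: "?G \<subseteq> Pow ?O" using F sets.sets_into_space assms(2) by fastforce
  have "?G \<subseteq> sets (restrict_space (lborel \<Otimes>\<^sub>M M) ?O)"
  proof
    fix X assume "X \<in> ?G"
    then have "X \<in> sets (lborel \<Otimes>\<^sub>M M)" using F assms(2) by (auto intro!: pair_measureI)
    moreover have "X \<subseteq> ?O" using G_space \<open>X \<in> ?G\<close> by blast
    ultimately show "X \<in> sets (restrict_space (lborel \<Otimes>\<^sub>M M) ?O)"
      using O by (subst sets_restrict_space_iff) (auto simp: Int_absorb2 sets.sets_into_space)
  qed
  moreover have "?O \<in> sets (restrict_space (lborel \<Otimes>\<^sub>M M) ?O)"
    using O by (metis sets.top space_restrict_space2)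
  ultimately show ?thesis unfolding predictable_sigma_def using sigma_le_sets[OF G_space] by auto
qed

lemma H2_measurable:
  assumes "std_brownian_motion M T B" "0 \<le> T" "a \<in> H2 M T B"
  shows "(\<lambda>(\<omega>, s). indicator {0..T} s * a s \<omega>) \<in> borel_measurable (M \<Otimes>\<^sub>M lborel)"
proof -
  let ?O = "{0..T} \<times> space M"
  have O: "?O \<in> sets (lborel \<Otimes>\<^sub>M M)" by (intro pair_measureI) auto
  have "subalgebra (restrict_space (lborel \<Otimes>\<^sub>M M) ?O) (predictable_sigma M T (nat_filtration M B))"
    unfolding subalgebra_def using sets_predictable_sigma_subset[OF assms(1,2)] O
    by (simp add: space_predictable_sigma space_restrict_space2)
  moreover have "(\<lambda>(t, \<omega>). a t \<omega>) \<in> borel_measurable (predictable_sigma M T (nat_filtration M B))"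
    using assms(3) unfolding H2_def by auto
  ultimately have "(\<lambda>(t, \<omega>). a t \<omega>) \<in> borel_measurable (restrict_space (lborel \<Otimes>\<^sub>M M) ?O)"
    by (rule measurable_from_subalg)
  then have "(\<lambda>x. indicator ?O x *\<^sub>R (case x of (t, \<omega>) \<Rightarrow> a t \<omega>)) \<in> borel_measurable (lborel \<Otimes>\<^sub>M M)"
    using O by (subst (asm) borel_measurable_restrict_space_iff) (auto simp: Int_absorb2 sets.sets_into_space)
  from measurable_comp[OF measurable_pair_swap' this]
  have "(\<lambda>(\<omega>, s). indicator ?O (s, \<omega>) *\<^sub>R a s \<omega>) \<in> borel_measurable (M \<Otimes>\<^sub>M lborel)"
    by (simp add: split_beta comp_def)
  then show ?thesis
    by (rule measurable_cong[THEN iffD1, rotated]) (auto simp: space_pair_measure indicator_def)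
qed

lemma abs_set_integral_Icc_le:
  fixes f :: "real \<Rightarrow> real"
  assumes f: "set_borel_measurable lborel {0..T} f" and "0 \<le> T"
  shows "ennreal \<bar>LINT s:{0..T}|lborel. f s\<bar>
    \<le> ennreal T + (\<integral>\<^sup>+ s. ennreal ((f s)\<^sup>2) * indicator {0..T} s \<partial>lborel)"
proof -
  let ?h = "\<lambda>s. indicator {0..T} s * f s"
  have h: "?h \<in> borel_measurable lborel" using f by (simp add: set_borel_measurable_def)
  have "ennreal \<bar>LINT s:{0..T}|lborel. f s\<bar> \<le> (\<integral>\<^sup>+ s. ennreal (norm (?h s)) \<partial>lborel)"
  proof (cases "integrable lborel ?h")
    case True
    then show ?thesis using integral_norm_bound_ennreal[OF True] by (simp add: set_lebesgue_integral_def)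
  qed (simp add: set_lebesgue_integral_def not_integrable_integral_eq)
  also have "\<dots> \<le> (\<integral>\<^sup>+ s. ennreal (indicator {0..T} s) + ennreal ((?h s)\<^sup>2) \<partial>lborel)"
  proof (intro nn_integral_mono)
    fix s
    have "\<bar>x\<bar> \<le> 1 + x\<^sup>2" for x :: real
      using zero_le_power2[of "\<bar>x\<bar> - 1"] unfolding power2_diff by simp
    then have "norm (?h s) \<le> indicator {0..T} s + (?h s)\<^sup>2" by (auto simp: indicator_def)
    then show "ennreal (norm (?h s)) \<le> ennreal (indicator {0..T} s) + ennreal ((?h s)\<^sup>2)"
      by (simp flip: ennreal_plus)
  qed
  also have "\<dots> = ennreal T + (\<integral>\<^sup>+ s. ennreal ((?h s)\<^sup>2) \<partial>lborel)"
    using h \<open>0 \<le> T\<close> by (subst nn_integral_add) (auto simp: ennreal_indicator)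
  also have "(\<integral>\<^sup>+ s. ennreal ((?h s)\<^sup>2) \<partial>lborel) = (\<integral>\<^sup>+ s. ennreal ((f s)\<^sup>2) * indicator {0..T} s \<partial>lborel)"
    by (intro nn_integral_cong) (auto simp: indicator_def)
  finally show ?thesis .
qed

context
  fixes M :: "'a measure" and T :: real and B a :: "real \<Rightarrow> 'a \<Rightarrow> real"
  assumes B: "std_brownian_motion M T B" and T: "0 \<le> T" and a: "a \<in> H2 M T B"
begin

lemma drift_borel_measurable: "(\<lambda>\<omega>. LINT s:{0..T}|lborel. a s \<omega>) \<in> borel_measurable M"
  using lborel.borel_measurable_lebesgue_integral[OF H2_measurable[OF B T a]]
  by (simp add: set_lebesgue_integral_def split_beta')

lemma energy_borel_measurable:
  "(\<lambda>\<omega>. \<integral>\<^sup>+ s. ennreal ((a s \<omega>)\<^sup>2) * indicator {0..T} s \<partial>lborel) \<in> borel_measurable M"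
proof -
  have "(\<lambda>(\<omega>, s). ennreal ((indicator {0..T} s * a s \<omega>)\<^sup>2)) \<in> borel_measurable (M \<Otimes>\<^sub>M lborel)"
    using measurable_compose[OF H2_measurable[OF B T a], of "\<lambda>x. ennreal (x\<^sup>2)"] by (simp add: split_beta)
  from lborel.borel_measurable_nn_integral[OF this]
  show ?thesis
    by (rule measurable_cong[THEN iffD1, rotated]) (auto intro!: nn_integral_cong simp: indicator_def)
qed

lemma has_exp_moments_drift: "has_exp_moments M (\<lambda>\<omega>. LINT s:{0..T}|lborel. a s \<omega>)"
  unfolding has_exp_moments_def
proof (intro conjI allI impI drift_borel_measurable)
  fix k :: real assume "k > 0"
  define J where "J = (\<lambda>\<omega>. \<integral>\<^sup>+ s. ennreal ((a s \<omega>)\<^sup>2) * indicator {0..T} s \<partial>lborel)"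
  define g where "g \<omega> = (if J \<omega> = \<infinity> then \<infinity> else ennreal (exp (k * enn2real (J \<omega>))))" for \<omega>
  have g: "g \<in> borel_measurable M"
    unfolding g_def using energy_borel_measurable unfolding J_def by measurable
  have "exp_moment_enn M k J < \<infinity>"
    using a \<open>k > 0\<close> unfolding H2_def J_def by blast
  then have "integral\<^sup>N M g < \<infinity>"
    unfolding exp_moment_enn_def g_def .
  have bound: "ennreal (exp (k * \<bar>LINT s:{0..T}|lborel. a s \<omega>\<bar>)) \<le> ennreal (exp (k * T)) * g \<omega>"
    if "\<omega> \<in> space M" for \<omega>
  proof (cases "J \<omega> = \<infinity>")
    case False
    have "ennreal \<bar>LINT s:{0..T}|lborel. a s \<omega>\<bar> \<le> ennreal T + J \<omega>"
      unfolding J_def using measurable_Pair2[OF H2_measurable[OF B T a] that] T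
      by (intro abs_set_integral_Icc_le) (simp_all add: set_borel_measurable_def)
    also have "\<dots> = ennreal (T + enn2real (J \<omega>))"
      using False T by (simp add: ennreal_plus ennreal_enn2real_if)
    finally have "\<bar>LINT s:{0..T}|lborel. a s \<omega>\<bar> \<le> T + enn2real (J \<omega>)"
      using T by (subst (asm) ennreal_le_iff) auto
    then have "exp (k * \<bar>LINT s:{0..T}|lborel. a s \<omega>\<bar>) \<le> exp (k * T) * exp (k * enn2real (J \<omega>))"
      using \<open>k > 0\<close> by (simp flip: exp_add distrib_left)
    then show ?thesis using False by (simp add: g_def flip: ennreal_mult)
  qed (simp add: g_def ennreal_mult_top)
  have "(\<integral>\<^sup>+ \<omega>. ennreal (norm (exp (k * \<bar>LINT s:{0..T}|lborel. a s \<omega>\<bar>))) \<partial>M)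
      \<le> (\<integral>\<^sup>+ \<omega>. ennreal (exp (k * T)) * g \<omega> \<partial>M)"
    using bound by (intro nn_integral_mono) auto
  also have "\<dots> = ennreal (exp (k * T)) * integral\<^sup>N M g" using g by (rule nn_integral_cmult)
  also have "\<dots> < \<infinity>" using \<open>integral\<^sup>N M g < \<infinity>\<close> by (simp add: ennreal_mult_less_top)
  finally show "integrable M (\<lambda>\<omega>. exp (k * \<bar>LINT s:{0..T}|lborel. a s \<omega>\<bar>))"
    using drift_borel_measurable by (intro integrableI_bounded) auto
qed

end

lemma has_exp_moments_state_minus:
  assumes "T > 0" and B: "std_brownian_motion M T B" and W: "W \<in> Wset M T B" and a: "a \<in> H2 M T B"
  shows "has_exp_moments M (\<lambda>\<omega>. state_proc x0 B a T \<omega> - W \<omega>)"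
proof -
  have "finite_measure M" using B unfolding std_brownian_motion_def by (simp add: prob_space_def)
  then have x0: "has_exp_moments M (\<lambda>_. x0)" by (rule has_exp_moments_const)
  have drift: "has_exp_moments M (\<lambda>\<omega>. LINT s:{0..T}|lborel. a s \<omega>)"
    using \<open>T > 0\<close> by (intro has_exp_moments_drift[OF B _ a]) simp
  have "has_exp_moments M W"
    using W unfolding Wset_def by (intro has_exp_moments_of_exp_integrable) auto
  from has_exp_moments_diff[OF has_exp_moments_add[OF has_exp_moments_add[OF x0 drift]
      has_exp_moments_brownian[OF B \<open>T > 0\<close>]] this]
  show ?thesis by (simp add: state_proc_def)
qed

theorem lemma5p1:
  fixes M :: "'a measure" and T x0 :: real and B a :: "real \<Rightarrow> 'a \<Rightarrow> real" and W :: "'a \<Rightarrow> real"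
  assumes "T > 0"
    and "std_brownian_motion M T B"
    and "W \<in> Wset M T B"
    and "a \<in> H2 M T B"
  shows "unif_integrable M {0<..<1} (\<lambda>\<gamma> \<omega>. U_tilde \<gamma> (state_proc x0 B a T \<omega> - W \<omega>))
    \<and> integrable M (\<lambda>\<omega>. state_proc x0 B a T \<omega> - W \<omega>)
    \<and> (\<integral>\<omega>. state_proc x0 B a T \<omega> - W \<omega> \<partial>M)
        = (\<integral>\<omega>. Lim (at_right 0) (\<lambda>\<gamma>. U_tilde \<gamma> (state_proc x0 B a T \<omega> - W \<omega>)) \<partial>M)
    \<and> ((\<lambda>\<gamma>. \<integral>\<omega>. U_tilde \<gamma> (state_proc x0 B a T \<omega> - W \<omega>) \<partial>M)
        \<longlongrightarrow> (\<integral>\<omega>. state_proc x0 B a T \<omega> - W \<omega> \<partial>M)) (at_right 0)"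
proof -
  define Y where "Y \<omega> = state_proc x0 B a T \<omega> - W \<omega>" for \<omega>
  have Y: "has_exp_moments M Y"
    unfolding Y_def using has_exp_moments_state_minus[OF assms] .
  then have Y_measurable: "Y \<in> borel_measurable M"
    and exp_Y: "integrable M (\<lambda>\<omega>. exp (2 * \<bar>Y \<omega>\<bar>))"
    by (simp_all add: has_exp_moments_def)
  have "Lim (at_right 0) (\<lambda>\<gamma>. U_tilde \<gamma> (Y \<omega>)) = Y \<omega>" for \<omega>
    by (rule tendsto_Lim[OF _ U_tilde_tendsto]) simp
  then show ?thesis
    unfolding Y_def[symmetric]
    using unif_integrable_U_tilde[OF Y_measurable exp_Y] tendsto_integral_U_tilde[OF Y_measurable exp_Y]
      has_exp_moments_integrable[OF Y]
    by simp
qed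

end
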